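(* Let $V$ be the vector module of $gl(m|n)$, $V(\Lambda)$ a finite-dimensional irreducible $gl(m|n)$-module with maximal $\mathbb{Z}$-graded component $V_0(\Lambda)$, and let $\langle\,,\,\rangle$ be the induced non-degenerate invariant sesquilinear form on $V\otimes V(\Lambda)$. If $0\neq v_+\in V\otimes V(\Lambda)$ is a maximal weight vector, then $\langle v_+,V\otimes V_0(\Lambda)\rangle\neq(0)$.
   Context: $L=gl(m|n)$ over $\mathbb{C}$, basis $E_{pq}$ ($1\le p,q\le m+n$), parity $(p)+(q)$ with $(p)=0$ for $p\le m$, $1$ otherwise, graded bracket $[E_{pq},E_{rs}]=\delta_{qr}E_{ps}-(-1)^{((p)+(q))((r)+(s))}\delta_{ps}E_{rq}$; $\mathbb{Z}$-grading $L=L_-\oplus L_0\oplus L_+$ with $L_0=gl(m)\oplus gl(n)$, $L_+=\mathrm{span}\{E_{pq}:p\le m<q\}$, $L_-=\mathrm{span}\{E_{qp}:p\le m<q\}$. The vector module $V$ has basis $|s\rangle$, $E_{pq}|s\rangle=\delta_{qs}|p\rangle$. $V_0(\Lambda)$ is the irreducible $L_0$-submodule of $V(\Lambda)$ generated by the highest weight vector. $V(\Lambda)$ (and likewise $V$) carries a unique non-degenerate sesquilinear form with $\langle av,w\rangle=\langle v,a^\dagger w\rangle$ for $a\in L$, where $(E_{pq})^\dagger=E_{qp}$; the form on $V$ is an inner product. The induced form on $V\otimes V(\Lambda)$ is $\langle v\otimes w,v'\otimes w'\rangle=\langle v,v'\rangle\langle w,w'\rangle$, which is non-degenerate and invariant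 in the same sense. A maximal weight vector is a weight vector annihilated by all $E_{pq}$ with $p<q$. *)

theory Defs
  imports Complex_Main
begin

text \<open>Indices of gl(m|n) (and basis vectors of the vector module V)
  range over {1..m+n}.  A finite-dimensional module W = V(Lambda) is C^d with basis
  indexed by {0..<d}; vectors are functions nat => complex vanishing from d on.
  The action of E_pq on W is the d x d matrix rho p q.  Each basis vector of W is
  homogeneous, with parity wpar j (True = odd).\<close>

definition par :: "nat \<Rightarrow> nat \<Rightarrow> nat" where
  "par m p = (if p \<le> m then 0 else 1)"

definition idx :: "nat \<Rightarrow> nat \<Rightarrow> nat set" where
  "idx m n = {1..m+n}"

definition vecs :: "nat \<Rightarrow> (nat \<Rightarrow> complex) set" where
  "vecs d = {v. \<forall>j. d \<le> j \<longrightarrow> v j = 0}"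

definition mv :: "nat \<Rightarrow> (nat \<Rightarrow> nat \<Rightarrow> complex) \<Rightarrow> (nat \<Rightarrow> complex) \<Rightarrow> (nat \<Rightarrow> complex)" where
  "mv d A v = (\<lambda>i. if i < d then (\<Sum>j<d. A i j * v j) else 0)"

definition gl_module ::
  "nat \<Rightarrow> nat \<Rightarrow> nat \<Rightarrow> (nat \<Rightarrow> bool) \<Rightarrow> (nat \<Rightarrow> nat \<Rightarrow> nat \<Rightarrow> nat \<Rightarrow> complex) \<Rightarrow> bool" where
  "gl_module m n d wpar rho \<longleftrightarrow>
     (\<forall>p\<in>idx m n. \<forall>q\<in>idx m n. \<forall>i<d. \<forall>j<d. rho p q i j \<noteq> 0 \<longrightarrow>
         (wpar i \<longleftrightarrow> (wpar j \<noteq> odd (par m p + par m q)))) \<and>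
     (\<forall>p\<in>idx m n. \<forall>q\<in>idx m n. \<forall>r\<in>idx m n. \<forall>s\<in>idx m n. \<forall>v\<in>vecs d.
        (\<lambda>i. mv d (rho p q) (mv d (rho r s) v) i
              - (-1) ^ ((par m p + par m q) * (par m r + par m s)) * mv d (rho r s) (mv d (rho p q) v) i)
      = (\<lambda>i. (if q = r then mv d (rho p s) v i else 0)
              - (-1) ^ ((par m p + par m q) * (par m r + par m s)) * (if p = s then mv d (rho r q) v i else 0)))"

definition lin_sub :: "nat \<Rightarrow> (nat \<Rightarrow> complex) set \<Rightarrow> bool" where
  "lin_sub d U \<longleftrightarrow> U \<subseteq> vecs d \<and> (\<lambda>_. 0) \<in> U \<and>
     (\<forall>u\<in>U. \<forall>w\<in>U. (\<lambda>i. u i + w i) \<in> U) \<and> (\<forall>c. \<forall>u\<in>U. (\<lambda>i. c * u i) \<in> U)"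

definition graded_sub :: "nat \<Rightarrow> (nat \<Rightarrow> bool) \<Rightarrow> (nat \<Rightarrow> complex) set \<Rightarrow> bool" where
  "graded_sub d wpar U \<longleftrightarrow> lin_sub d U \<and> (\<forall>u\<in>U. (\<lambda>i. if wpar i then 0 else u i) \<in> U)"

definition irreducible_module ::
  "nat \<Rightarrow> nat \<Rightarrow> nat \<Rightarrow> (nat \<Rightarrow> bool) \<Rightarrow> (nat \<Rightarrow> nat \<Rightarrow> nat \<Rightarrow> nat \<Rightarrow> complex) \<Rightarrow> bool" where
  "irreducible_module m n d wpar rho \<longleftrightarrow> gl_module m n d wpar rho \<and> 0 < d \<and>
     (\<forall>U. graded_sub d wpar U \<and> (\<forall>p\<in>idx m n. \<forall>q\<in>idx m n. \<forall>u\<in>U. mv d (rho p q) u \<in> U)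
          \<longrightarrow> U = {\<lambda>_. 0} \<or> U = vecs d)"

text \<open>Highest weight vector of W (distinguished Borel: annihilated by E_pq, p<q).\<close>
definition hw_vector ::
  "nat \<Rightarrow> nat \<Rightarrow> nat \<Rightarrow> (nat \<Rightarrow> nat \<Rightarrow> nat \<Rightarrow> nat \<Rightarrow> complex) \<Rightarrow> (nat \<Rightarrow> complex) \<Rightarrow> bool" where
  "hw_vector m n d rho w0 \<longleftrightarrow> w0 \<in> vecs d \<and> w0 \<noteq> (\<lambda>_. 0) \<and>
     (\<exists>lam. \<forall>i\<in>idx m n. mv d (rho i i) w0 = (\<lambda>j. lam i * w0 j)) \<and>
     (\<forall>p\<in>idx m n. \<forall>q\<in>idx m n. p < q \<longrightarrow> mv d (rho p q) w0 = (\<lambda>_. 0))"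

text \<open>V_0(Lambda): the L_0 = gl(m)+gl(n) submodule generated by w0.\<close>
definition V0 ::
  "nat \<Rightarrow> nat \<Rightarrow> nat \<Rightarrow> (nat \<Rightarrow> nat \<Rightarrow> nat \<Rightarrow> nat \<Rightarrow> complex) \<Rightarrow> (nat \<Rightarrow> complex) \<Rightarrow> (nat \<Rightarrow> complex) set" where
  "V0 m n d rho w0 = \<Inter>{U. lin_sub d U \<and> w0 \<in> U \<and>
      (\<forall>p\<in>idx m n. \<forall>q\<in>idx m n. (p \<le> m \<longleftrightarrow> q \<le> m) \<longrightarrow> (\<forall>u\<in>U. mv d (rho p q) u \<in> U))}"

definition wform :: "nat \<Rightarrow> (nat \<Rightarrow> nat \<Rightarrow> complex) \<Rightarrow> (nat \<Rightarrow> complex) \<Rightarrow> (nat \<Rightarrow> complex) \<Rightarrow> complex" where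
  "wform d G v w = (\<Sum>i<d. \<Sum>j<d. v i * G i j * cnj (w j))"

definition invariant_nondeg_form ::
  "nat \<Rightarrow> nat \<Rightarrow> nat \<Rightarrow> (nat \<Rightarrow> nat \<Rightarrow> nat \<Rightarrow> nat \<Rightarrow> complex) \<Rightarrow> (nat \<Rightarrow> nat \<Rightarrow> complex) \<Rightarrow> bool" where
  "invariant_nondeg_form m n d rho G \<longleftrightarrow>
     (\<forall>v\<in>vecs d. v \<noteq> (\<lambda>_. 0) \<longrightarrow> (\<exists>w\<in>vecs d. wform d G v w \<noteq> 0)) \<and>
     (\<forall>p\<in>idx m n. \<forall>q\<in>idx m n. \<forall>v\<in>vecs d. \<forall>w\<in>vecs d.
        wform d G (mv d (rho p q) v) w = wform d G v (mv d (rho q p) w))"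

text \<open>Tensor product V \<otimes> W: x s j is the coefficient of |s> \<otimes> e_j.\<close>
definition tvecs :: "nat \<Rightarrow> nat \<Rightarrow> nat \<Rightarrow> (nat \<Rightarrow> nat \<Rightarrow> complex) set" where
  "tvecs m n d = {x. \<forall>s j. (s \<notin> idx m n \<or> d \<le> j) \<longrightarrow> x s j = 0}"

text \<open>E_pq (|s> \<otimes> w) = E_pq|s> \<otimes> w + (-1)^(((p)+(q))(s)) |s> \<otimes> E_pq w.\<close>
definition tact ::
  "nat \<Rightarrow> nat \<Rightarrow> nat \<Rightarrow> (nat \<Rightarrow> nat \<Rightarrow> nat \<Rightarrow> nat \<Rightarrow> complex) \<Rightarrow> nat \<Rightarrow> nat
     \<Rightarrow> (nat \<Rightarrow> nat \<Rightarrow> complex) \<Rightarrow> (nat \<Rightarrow> nat \<Rightarrow> complex)" where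
  "tact m n d rho p q x = (\<lambda>s j. if s \<in> idx m n \<and> j < d then
       (if s = p then x q j else 0)
       + (-1) ^ ((par m p + par m q) * par m s) * (\<Sum>j'<d. rho p q j j' * x s j')
     else 0)"

text \<open>Induced form: standard inner product on V times the form on W.\<close>
definition tform :: "nat \<Rightarrow> nat \<Rightarrow> nat \<Rightarrow> (nat \<Rightarrow> nat \<Rightarrow> complex)
     \<Rightarrow> (nat \<Rightarrow> nat \<Rightarrow> complex) \<Rightarrow> (nat \<Rightarrow> nat \<Rightarrow> complex) \<Rightarrow> complex" where
  "tform m n d G x y = (\<Sum>s\<in>idx m n. wform d G (x s) (y s))"

definition maximal_weight_vector ::
  "nat \<Rightarrow> nat \<Rightarrow> nat \<Rightarrow> (nat \<Rightarrow> nat \<Rightarrow> nat \<Rightarrow> nat \<Rightarrow> complex) \<Rightarrow> (nat \<Rightarrow> nat \<Rightarrow> complex) \<Rightarrow> bool" where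
  "maximal_weight_vector m n d rho x \<longleftrightarrow> x \<in> tvecs m n d \<and>
     (\<exists>mu. \<forall>i\<in>idx m n. tact m n d rho i i x = (\<lambda>s j. mu i * x s j)) \<and>
     (\<forall>p\<in>idx m n. \<forall>q\<in>idx m n. p < q \<longrightarrow> tact m n d rho p q x = (\<lambda>_ _. 0))"

end

theory Submission
  imports Defs
begin

text \<open>Write v as the sum of the |s> \<otimes> v_s and let D be the set of w in V(Lambda) with
  <v_s, w> = 0 for all s.  If v were orthogonal to V \<otimes> V_0(Lambda), then D would contain
  the highest weight vector w0.  Since v is killed by the raising operators and E_pq is adjoint
  to E_qp, D is closed under the lowering operators.  But V(Lambda) is spanned by lowering
  operators applied to w0: the lowering closure of a homogeneous highest weight vector is a graded
  submodule, hence everything by irreducibility, and by nondegeneracy of the form a highest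
  vector generating the module is a multiple of every other one.  So D = V(Lambda), and every
  v_s vanishes by nondegeneracy.\<close>

lemma mv_in_vecs: "mv d A v \<in> vecs d"
  by (simp add: vecs_def mv_def)

lemma mv_add: "mv d A (\<lambda>i. x i + y i) = (\<lambda>i. mv d A x i + mv d A y i)"
  by (auto simp: mv_def fun_eq_iff sum.distrib algebra_simps)

lemma mv_scale: "mv d A (\<lambda>i. c * x i) = (\<lambda>i. c * mv d A x i)"
  by (auto simp: mv_def fun_eq_iff sum_distrib_left algebra_simps)

lemma lin_sub_vecs: "lin_sub d (vecs d)"
  by (simp add: lin_sub_def vecs_def)

lemma lin_sub_zero: "lin_sub d U \<Longrightarrow> (\<lambda>_. 0) \<in> U"
  unfolding lin_sub_def by blast

lemma lin_sub_add: "lin_sub d U \<Longrightarrow> x \<in> U \<Longrightarrow> y \<in> U \<Longrightarrow> (\<lambda>i. x i + y i) \<in> U"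
  unfolding lin_sub_def by blast

lemma lin_sub_scale: "lin_sub d U \<Longrightarrow> x \<in> U \<Longrightarrow> (\<lambda>i. c * x i) \<in> U"
  unfolding lin_sub_def by blast

lemma lin_sub_subset_vecs: "lin_sub d U \<Longrightarrow> U \<subseteq> vecs d"
  unfolding lin_sub_def by blast

lemma lin_sub_diff: "lin_sub d U \<Longrightarrow> x \<in> U \<Longrightarrow> y \<in> U \<Longrightarrow> (\<lambda>i. x i - y i) \<in> U"
  using lin_sub_add[of d U x "\<lambda>i. (-1) * y i"] lin_sub_scale[of d U y "-1"] by simp

lemma lin_sub_preimage:
  assumes "lin_sub d U"
    and add: "\<And>k x y. k \<in> K \<Longrightarrow> f k (\<lambda>i. x i + y i) = (\<lambda>i. f k x i + f k y i)"
    and scale: "\<And>k c x. k \<in> K \<Longrightarrow> f k (\<lambda>i. c * x i) = (\<lambda>i. c * f k x i)"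
  shows "lin_sub d {t \<in> U. \<forall>k\<in>K. f k t \<in> U}"
proof -
  have "f k (\<lambda>_. 0) = (\<lambda>_. 0)" if "k \<in> K" for k
    using scale[OF that, of 0 "\<lambda>_. 0"] by simp
  then show ?thesis
    using assms(1) lin_sub_zero[OF assms(1)] lin_sub_add[OF assms(1)] lin_sub_scale[OF assms(1)]
    unfolding lin_sub_def by (auto simp: add scale)
qed

lemma wform_add_left: "wform d G (\<lambda>i. x i + y i) w = wform d G x w + wform d G y w"
  by (simp add: wform_def sum.distrib algebra_simps)

lemma wform_scale_left: "wform d G (\<lambda>i. c * x i) w = c * wform d G x w"
  by (simp add: wform_def sum_distrib_left algebra_simps)

lemma wform_add_right: "wform d G v (\<lambda>i. x i + y i) = wform d G v x + wform d G v y"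
  by (simp add: wform_def sum.distrib algebra_simps)

lemma wform_scale_right: "wform d G v (\<lambda>i. c * x i) = cnj c * wform d G v x"
  by (simp add: wform_def sum_distrib_left algebra_simps)

lemma wform_zero_left [simp]: "wform d G (\<lambda>_. 0) w = 0"
  by (simp add: wform_def)

lemma wform_zero_right [simp]: "wform d G v (\<lambda>_. 0) = 0"
  by (simp add: wform_def)

lemma lin_sub_orthogonal: "lin_sub d {w \<in> vecs d. \<forall>s\<in>S. wform d G (f s) w = 0}"
  by (auto simp: lin_sub_def vecs_def wform_add_right wform_scale_right)

lemma invariant_nondeg_formD:
  assumes "invariant_nondeg_form m n d rho G"
  shows invariant_nondeg_form_nondeg:
      "\<lbrakk>v \<in> vecs d; \<forall>w\<in>vecs d. wform d G v w = 0\<rbrakk> \<Longrightarrow> v = (\<lambda>_. 0)"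
    and invariant_nondeg_form_adjoint:
      "\<lbrakk>p \<in> idx m n; q \<in> idx m n; v \<in> vecs d; w \<in> vecs d\<rbrakk> \<Longrightarrow>
      wform d G (mv d (rho p q) v) w = wform d G v (mv d (rho q p) w)"
  using assms unfolding invariant_nondeg_form_def by blast+

definition lowering_closed ::
  "nat \<Rightarrow> nat \<Rightarrow> nat \<Rightarrow> (nat \<Rightarrow> nat \<Rightarrow> nat \<Rightarrow> nat \<Rightarrow> complex) \<Rightarrow> (nat \<Rightarrow> complex) set \<Rightarrow> bool" where
  "lowering_closed m n d rho U \<longleftrightarrow>
     (\<forall>p\<in>idx m n. \<forall>q\<in>idx m n. q < p \<longrightarrow> (\<forall>t\<in>U. mv d (rho p q) t \<in> U))"

definition lowering_closure ::
  "nat \<Rightarrow> nat \<Rightarrow> nat \<Rightarrow> (nat \<Rightarrow> nat \<Rightarrow> nat \<Rightarrow> nat \<Rightarrow> complex) \<Rightarrow> (nat \<Rightarrow> complex)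
     \<Rightarrow> (nat \<Rightarrow> complex) set" where
  "lowering_closure m n d rho u = \<Inter>{U. lin_sub d U \<and> u \<in> U \<and> lowering_closed m n d rho U}"

definition highest_vector ::
  "nat \<Rightarrow> nat \<Rightarrow> nat \<Rightarrow> (nat \<Rightarrow> nat \<Rightarrow> nat \<Rightarrow> nat \<Rightarrow> complex) \<Rightarrow> (nat \<Rightarrow> complex) \<Rightarrow> bool" where
  "highest_vector m n d rho z \<longleftrightarrow> z \<in> vecs d \<and>
     (\<forall>p\<in>idx m n. \<forall>q\<in>idx m n. p < q \<longrightarrow> mv d (rho p q) z = (\<lambda>_. 0))"

definition even_part :: "(nat \<Rightarrow> bool) \<Rightarrow> (nat \<Rightarrow> complex) \<Rightarrow> (nat \<Rightarrow> complex)" where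
  "even_part wpar w = (\<lambda>i. if wpar i then 0 else w i)"

lemma lowering_closure_least:
  "\<lbrakk>lin_sub d U; u \<in> U; lowering_closed m n d rho U\<rbrakk> \<Longrightarrow> lowering_closure m n d rho u \<subseteq> U"
  unfolding lowering_closure_def by blast

lemma lowering_closure_base: "u \<in> lowering_closure m n d rho u"
  unfolding lowering_closure_def by blast

lemma lowering_closed_lowering_closure: "lowering_closed m n d rho (lowering_closure m n d rho u)"
  unfolding lowering_closure_def lowering_closed_def by blast

lemma lowering_closure_lower:
  "\<lbrakk>p \<in> idx m n; q \<in> idx m n; q < p; t \<in> lowering_closure m n d rho u\<rbrakk>
   \<Longrightarrow> mv d (rho p q) t \<in> lowering_closure m n d rho u"
  using lowering_closed_lowering_closure unfolding lowering_closed_def by blast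

lemma lin_sub_lowering_closure:
  assumes "u \<in> vecs d"
  shows "lin_sub d (lowering_closure m n d rho u)"
proof -
  have "lin_sub d (vecs d) \<and> u \<in> vecs d \<and> lowering_closed m n d rho (vecs d)"
    using assms lin_sub_vecs mv_in_vecs unfolding lowering_closed_def by blast
  then show ?thesis
    unfolding lowering_closure_def lin_sub_def by blast
qed

lemma gl_module_commute:
  assumes "gl_module m n d wpar rho" "p \<in> idx m n" "q \<in> idx m n" "r \<in> idx m n" "s \<in> idx m n"
    and "t \<in> vecs d"
  defines "e \<equiv> (-1) ^ ((par m r + par m s) * (par m p + par m q))"
  shows "mv d (rho r s) (mv d (rho p q) t) = (\<lambda>i. (if s = p then mv d (rho r q) t i else 0)
      - e * (if r = q then mv d (rho p s) t i else 0) + e * mv d (rho p q) (mv d (rho r s) t) i)"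
proof
  fix i
  have "mv d (rho r s) (mv d (rho p q) t) i - e * mv d (rho p q) (mv d (rho r s) t) i
      = (if s = p then mv d (rho r q) t i else 0) - e * (if r = q then mv d (rho p s) t i else 0)"
    using assms unfolding gl_module_def by (metis (no_types, lifting))
  then show "mv d (rho r s) (mv d (rho p q) t) i = (if s = p then mv d (rho r q) t i else 0)
      - e * (if r = q then mv d (rho p s) t i else 0) + e * mv d (rho p q) (mv d (rho r s) t) i"
    by (simp add: algebra_simps)
qed

lemma mv_even_part:
  assumes "gl_module m n d wpar rho" "p \<in> idx m n" "q \<in> idx m n"
  shows "mv d (rho p q) (even_part wpar w) = (if even (par m p + par m q)
           then even_part wpar (mv d (rho p q) w)
           else (\<lambda>i. mv d (rho p q) w i - even_part wpar (mv d (rho p q) w) i))"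
proof -
  have par: "\<And>i j. \<lbrakk>i < d; j < d; rho p q i j \<noteq> 0\<rbrakk> \<Longrightarrow>
      (wpar i \<longleftrightarrow> (wpar j \<noteq> odd (par m p + par m q)))"
    using assms unfolding gl_module_def by blast
  show ?thesis
  proof (cases "even (par m p + par m q)")
    case True
    then have "\<And>i j. i < d \<Longrightarrow> j < d \<Longrightarrow>
        rho p q i j * (if wpar j then 0 else w j) = (if wpar i then 0 else rho p q i j * w j)"
      using par by (metis mult_zero_left mult_zero_right)
    then show ?thesis
      using True by (auto simp: even_part_def mv_def fun_eq_iff sum.neutral)
  next
    case False
    then have "\<And>i j. i < d \<Longrightarrow> j < d \<Longrightarrow>
        rho p q i j * (if wpar j then 0 else w j) = (if wpar i then rho p q i j * w j else 0)"
      using par by (metis mult_zero_left mult_zero_right)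
    then show ?thesis
      using False by (auto simp: even_part_def mv_def fun_eq_iff sum.neutral)
  qed
qed

text \<open>Commuting a raising or diagonal operator past a lowering one only produces terms
  already in N.\<close>

lemma lowering_closed_raise_step:
  assumes gl: "gl_module m n d wpar rho"
    and N: "lin_sub d N" "lowering_closed m n d rho N"
    and t: "t \<in> N" "\<And>r s. \<lbrakk>r \<in> idx m n; s \<in> idx m n; r \<le> s\<rbrakk> \<Longrightarrow> mv d (rho r s) t \<in> N"
    and pq: "p \<in> idx m n" "q \<in> idx m n" "q < p"
    and rs: "r \<in> idx m n" "s \<in> idx m n" "r \<le> s"
  shows "mv d (rho r s) (mv d (rho p q) t) \<in> N"
proof -
  have lower: "\<And>p q t. \<lbrakk>p \<in> idx m n; q \<in> idx m n; q < p; t \<in> N\<rbrakk> \<Longrightarrow> mv d (rho p q) t \<in> N"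
    using N(2) unfolding lowering_closed_def by blast
  have all: "mv d (rho a b) t \<in> N" if "a \<in> idx m n" "b \<in> idx m n" for a b
    using t that lower by (metis not_le)
  define e :: complex where "e = (-1) ^ ((par m r + par m s) * (par m p + par m q))"
  have A: "(\<lambda>i. if s = p then mv d (rho r q) t i else 0) \<in> N"
    using all[of r q] rs pq lin_sub_zero[OF N(1)] by (cases "s = p") simp_all
  have B: "(\<lambda>i. e * (if r = q then mv d (rho p s) t i else 0)) \<in> N"
    using lin_sub_scale[OF N(1) all[of p s]] rs pq lin_sub_zero[OF N(1)] by (cases "r = q") simp_all
  have C: "(\<lambda>i. e * mv d (rho p q) (mv d (rho r s) t) i) \<in> N"
    using lin_sub_scale[OF N(1) lower[OF pq t(2)[OF rs]]] .
  have "t \<in> vecs d"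
    using t(1) lin_sub_subset_vecs[OF N(1)] by blast
  then have "mv d (rho r s) (mv d (rho p q) t) = (\<lambda>i. (if s = p then mv d (rho r q) t i else 0)
      - e * (if r = q then mv d (rho p s) t i else 0) + e * mv d (rho p q) (mv d (rho r s) t) i)"
    unfolding e_def by (rule gl_module_commute[OF gl pq(1,2) rs(1,2)])
  also have "\<dots> \<in> N"
    using lin_sub_add[OF N(1) lin_sub_diff[OF N(1) A B] C] by simp
  finally show ?thesis .
qed

lemma lowering_closure_invariant:
  assumes gl: "gl_module m n d wpar rho"
    and u: "highest_vector m n d rho u" "\<forall>i\<in>idx m n. mv d (rho i i) u = (\<lambda>j. lam i * u j)"
    and rs: "r \<in> idx m n" "s \<in> idx m n"
    and t: "t \<in> lowering_closure m n d rho u"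
  shows "mv d (rho r s) t \<in> lowering_closure m n d rho u"
proof -
  let ?N = "lowering_closure m n d rho u"
  let ?K = "{k. fst k \<in> idx m n \<and> snd k \<in> idx m n \<and> fst k \<le> snd k}"
  define Good where "Good = {t \<in> ?N. \<forall>k\<in>?K. mv d (rho (fst k) (snd k)) t \<in> ?N}"
  have N: "lin_sub d ?N"
    using u(1) lin_sub_lowering_closure unfolding highest_vector_def by blast
  have "lin_sub d Good"
    unfolding Good_def by (rule lin_sub_preimage[OF N]) (simp_all add: mv_add mv_scale)
  moreover have "u \<in> Good"
  proof -
    have "mv d (rho a b) u \<in> ?N" if "a \<in> idx m n" "b \<in> idx m n" "a \<le> b" for a b
    proof (cases "a = b")
      case True
      then show ?thesis
        using u(2) that lin_sub_scale[OF N lowering_closure_base] by metis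
    next
      case False
      then show ?thesis
        using u(1) that lin_sub_zero[OF N] unfolding highest_vector_def by auto
    qed
    then show ?thesis
      unfolding Good_def using lowering_closure_base by blast
  qed
  moreover have "lowering_closed m n d rho Good"
    unfolding lowering_closed_def Good_def
    using lowering_closed_raise_step[OF gl N lowering_closed_lowering_closure]
      lowering_closure_lower by auto
  ultimately have "?N \<subseteq> Good"
    by (rule lowering_closure_least)
  then show ?thesis
    using t rs lowering_closure_lower unfolding Good_def by (cases "r \<le> s") auto
qed

lemma lowering_closed_even_part_step:
  assumes gl: "gl_module m n d wpar rho"
    and N: "lin_sub d N" "lowering_closed m n d rho N"
    and t: "t \<in> N" "even_part wpar t \<in> N"
    and pq: "p \<in> idx m n" "q \<in> idx m n" "q < p"
  shows "even_part wpar (mv d (rho p q) t) \<in> N"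
proof -
  have lower: "mv d (rho p q) t \<in> N" "mv d (rho p q) (even_part wpar t) \<in> N"
    using N(2) t pq unfolding lowering_closed_def by blast+
  show ?thesis
  proof (cases "even (par m p + par m q)")
    case True
    then show ?thesis
      using lower(2) mv_even_part[OF gl pq(1,2)] by simp
  next
    case False
    then have "even_part wpar (mv d (rho p q) t)
        = (\<lambda>i. mv d (rho p q) t i - mv d (rho p q) (even_part wpar t) i)"
      using mv_even_part[OF gl pq(1,2)] by (simp add: fun_eq_iff)
    then show ?thesis
      using lin_sub_diff[OF N(1) lower] by simp
  qed
qed

lemma lowering_closure_graded:
  assumes gl: "gl_module m n d wpar rho"
    and u: "u \<in> vecs d" "even_part wpar u = u \<or> even_part wpar u = (\<lambda>_. 0)"
  shows "graded_sub d wpar (lowering_closure m n d rho u)"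
proof -
  let ?N = "lowering_closure m n d rho u"
  define Gr where "Gr = {t \<in> ?N. even_part wpar t \<in> ?N}"
  have N: "lin_sub d ?N"
    using u(1) by (rule lin_sub_lowering_closure)
  have "lin_sub d Gr"
    using lin_sub_preimage[OF N, of "UNIV :: unit set" "\<lambda>_. even_part wpar"]
    unfolding Gr_def by (simp add: even_part_def fun_eq_iff)
  moreover have "u \<in> Gr"
    using u(2) lowering_closure_base lin_sub_zero[OF N] unfolding Gr_def by auto
  moreover have "lowering_closed m n d rho Gr"
    unfolding lowering_closed_def Gr_def
    using lowering_closed_even_part_step[OF gl N lowering_closed_lowering_closure]
      lowering_closure_lower by auto
  ultimately have "?N \<subseteq> Gr"
    by (rule lowering_closure_least)
  then show ?thesis
    using N unfolding graded_sub_def Gr_def even_part_def by blast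
qed

lemma lowering_closure_eq_vecs:
  assumes irr: "irreducible_module m n d wpar rho"
    and u: "highest_vector m n d rho u" "\<forall>i\<in>idx m n. mv d (rho i i) u = (\<lambda>j. lam i * u j)"
      "even_part wpar u = u \<or> even_part wpar u = (\<lambda>_. 0)" "u \<noteq> (\<lambda>_. 0)"
  shows "lowering_closure m n d rho u = vecs d"
proof -
  have gl: "gl_module m n d wpar rho"
    using irr unfolding irreducible_module_def by blast
  have "graded_sub d wpar (lowering_closure m n d rho u)"
    using lowering_closure_graded[OF gl] u(1,3) unfolding highest_vector_def by blast
  moreover have "\<forall>p\<in>idx m n. \<forall>q\<in>idx m n. \<forall>t\<in>lowering_closure m n d rho u.
      mv d (rho p q) t \<in> lowering_closure m n d rho u"
    using lowering_closure_invariant[OF gl u(1,2)] by blast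
  ultimately show ?thesis
    using irr lowering_closure_base[of u] u(4) unfolding irreducible_module_def by blast
qed

lemma highest_pairing_proportional:
  assumes inv: "invariant_nondeg_form m n d rho G"
    and N: "lowering_closure m n d rho u = vecs d" and u: "u \<in> vecs d"
    and t: "t \<in> vecs d"
  shows "\<exists>c. \<forall>z. highest_vector m n d rho z \<longrightarrow> wform d G z t = c * wform d G z u"
proof -
  define Ms where
    "Ms = {t \<in> vecs d. \<exists>c. \<forall>z. highest_vector m n d rho z \<longrightarrow> wform d G z t = c * wform d G z u}"
  have "lin_sub d Ms"
    unfolding lin_sub_def
  proof (intro conjI ballI allI)
    show "Ms \<subseteq> vecs d" "(\<lambda>_. 0) \<in> Ms"
      unfolding Ms_def using lin_sub_zero[OF lin_sub_vecs] by (auto intro: exI[of _ 0])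
  next
    fix x y assume "x \<in> Ms" "y \<in> Ms"
    then obtain a b where
      "x \<in> vecs d" "\<forall>z. highest_vector m n d rho z \<longrightarrow> wform d G z x = a * wform d G z u"
      "y \<in> vecs d" "\<forall>z. highest_vector m n d rho z \<longrightarrow> wform d G z y = b * wform d G z u"
      unfolding Ms_def by blast
    then show "(\<lambda>i. x i + y i) \<in> Ms"
      unfolding Ms_def using lin_sub_add[OF lin_sub_vecs]
      by (auto simp: wform_add_right algebra_simps intro!: exI[of _ "a + b"])
  next
    fix k x assume "x \<in> Ms"
    then obtain a where
      "x \<in> vecs d" "\<forall>z. highest_vector m n d rho z \<longrightarrow> wform d G z x = a * wform d G z u"
      unfolding Ms_def by blast
    then show "(\<lambda>i. k * x i) \<in> Ms"
      unfolding Ms_def using lin_sub_scale[OF lin_sub_vecs]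
      by (auto simp: wform_scale_right intro!: exI[of _ "cnj k * a"])
  qed
  moreover have "u \<in> Ms"
    unfolding Ms_def using u by (auto intro: exI[of _ 1])
  moreover have "lowering_closed m n d rho Ms"
    unfolding lowering_closed_def
  proof (intro ballI impI)
    fix p q x assume pq: "p \<in> idx m n" "q \<in> idx m n" "q < p" and "x \<in> Ms"
    then have "x \<in> vecs d" unfolding Ms_def by blast
    have "wform d G z (mv d (rho p q) x) = 0" if "highest_vector m n d rho z" for z
      using that pq invariant_nondeg_form_adjoint[OF inv pq(2,1) _ \<open>x \<in> vecs d\<close>, of z]
      unfolding highest_vector_def by simp
    then show "mv d (rho p q) x \<in> Ms"
      unfolding Ms_def using mv_in_vecs by (auto intro: exI[of _ 0])
  qed
  ultimately have "vecs d \<subseteq> Ms"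
    unfolding N[symmetric] by (rule lowering_closure_least)
  then show ?thesis
    using t unfolding Ms_def by blast
qed

text \<open>By the preceding lemma a highest vector orthogonal to u is orthogonal to everything,
  and z = <u, u> w - <w, u> u is such a vector.\<close>

lemma highest_vector_unique:
  assumes inv: "invariant_nondeg_form m n d rho G"
    and N: "lowering_closure m n d rho u = vecs d"
    and u: "highest_vector m n d rho u" "u \<noteq> (\<lambda>_. 0)"
    and w: "highest_vector m n d rho w" "w \<noteq> (\<lambda>_. 0)"
  shows "\<exists>c. u = (\<lambda>i. c * w i)"
proof -
  have uv: "u \<in> vecs d" and wv: "w \<in> vecs d"
    using u(1) w(1) unfolding highest_vector_def by blast+
  note proportional = highest_pairing_proportional[OF inv N uv]
  define a where "a = wform d G w u"
  define b where "b = wform d G u u"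
  define z where "z = (\<lambda>i. b * w i + (- a) * u i)"
  have zv: "z \<in> vecs d"
    unfolding z_def using uv wv by (simp add: vecs_def)
  have "highest_vector m n d rho z"
    using zv u(1) w(1) unfolding highest_vector_def z_def mv_add mv_scale by simp
  moreover have "wform d G z u = 0"
    unfolding z_def by (simp only: wform_add_left wform_scale_left) (simp add: a_def b_def)
  ultimately have "\<forall>t\<in>vecs d. wform d G z t = 0"
    using proportional by fastforce
  then have z0: "z = (\<lambda>_. 0)"
    using invariant_nondeg_form_nondeg[OF inv zv] by blast
  have "b \<noteq> 0"
  proof
    assume "b = 0"
    then have "\<forall>t\<in>vecs d. wform d G u t = 0"
      using proportional u(1) unfolding b_def by fastforce
    then show False
      using invariant_nondeg_form_nondeg[OF inv uv] u(2) by blast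
  qed
  have eq: "\<And>i. b * w i = a * u i"
    using fun_cong[OF z0] unfolding z_def by simp
  have "a \<noteq> 0"
    using eq \<open>b \<noteq> 0\<close> w(2) by (auto simp: fun_eq_iff)
  then have "u = (\<lambda>i. (b / a) * w i)"
    using eq by (simp add: fun_eq_iff field_simps)
  then show ?thesis by blast
qed

lemma exists_homogeneous_highest_weight_vector:
  assumes gl: "gl_module m n d wpar rho" and hw: "hw_vector m n d rho w0"
  shows "\<exists>u lam. highest_vector m n d rho u \<and> (\<forall>i\<in>idx m n. mv d (rho i i) u = (\<lambda>j. lam i * u j))
    \<and> (even_part wpar u = u \<or> even_part wpar u = (\<lambda>_. 0)) \<and> u \<noteq> (\<lambda>_. 0)"
proof -
  obtain lam where lam: "\<forall>i\<in>idx m n. mv d (rho i i) w0 = (\<lambda>j. lam i * w0 j)"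
    using hw unfolding hw_vector_def by blast
  have w0: "highest_vector m n d rho w0" "w0 \<noteq> (\<lambda>_. 0)"
    using hw unfolding hw_vector_def highest_vector_def by blast+
  show ?thesis
  proof (cases "even_part wpar w0 = (\<lambda>_. 0)")
    case True
    then show ?thesis using lam w0 by blast
  next
    case False
    have "highest_vector m n d rho (even_part wpar w0)"
      using w0(1) mv_even_part[OF gl]
      unfolding highest_vector_def by (simp add: even_part_def vecs_def fun_eq_iff)
    moreover have "\<forall>i\<in>idx m n. mv d (rho i i) (even_part wpar w0) = (\<lambda>j. lam i * even_part wpar w0 j)"
      using lam mv_even_part[OF gl] by (simp add: even_part_def fun_eq_iff)
    moreover have "even_part wpar (even_part wpar w0) = even_part wpar w0"
      by (simp add: even_part_def fun_eq_iff)
    ultimately show ?thesis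
      using False by blast
  qed
qed

lemma lowering_closure_hw_vector:
  assumes irr: "irreducible_module m n d wpar rho" and hw: "hw_vector m n d rho w0"
    and inv: "invariant_nondeg_form m n d rho G"
  shows "lowering_closure m n d rho w0 = vecs d"
proof -
  have gl: "gl_module m n d wpar rho"
    using irr unfolding irreducible_module_def by blast
  obtain u lam where u: "highest_vector m n d rho u" "\<forall>i\<in>idx m n. mv d (rho i i) u = (\<lambda>j. lam i * u j)"
    "even_part wpar u = u \<or> even_part wpar u = (\<lambda>_. 0)" "u \<noteq> (\<lambda>_. 0)"
    using exists_homogeneous_highest_weight_vector[OF gl hw] by blast
  have Nu: "lowering_closure m n d rho u = vecs d"
    using lowering_closure_eq_vecs[OF irr u] .
  have w0: "highest_vector m n d rho w0" "w0 \<noteq> (\<lambda>_. 0)" "w0 \<in> vecs d"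
    using hw unfolding hw_vector_def highest_vector_def by blast+
  obtain c where "u = (\<lambda>i. c * w0 i)"
    using highest_vector_unique[OF inv Nu u(1,4) w0(1,2)] by blast
  then have "u \<in> lowering_closure m n d rho w0"
    using lin_sub_scale[OF lin_sub_lowering_closure[OF w0(3)] lowering_closure_base] by simp
  then have "vecs d \<subseteq> lowering_closure m n d rho w0"
    unfolding Nu[symmetric]
    by (rule lowering_closure_least[OF lin_sub_lowering_closure[OF w0(3)] _ lowering_closed_lowering_closure])
  then show ?thesis
    using lin_sub_subset_vecs[OF lin_sub_lowering_closure[OF w0(3)]] by blast
qed

definition simple_tensor :: "nat \<Rightarrow> (nat \<Rightarrow> complex) \<Rightarrow> nat \<Rightarrow> nat \<Rightarrow> complex" where
  "simple_tensor s w = (\<lambda>s' j. if s' = s then w j else 0)"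

lemma simple_tensor_apply: "simple_tensor s w s' = (if s' = s then w else (\<lambda>_. 0))"
  by (simp add: simple_tensor_def fun_eq_iff)

lemma simple_tensor_in_tvecs: "s \<in> idx m n \<Longrightarrow> w \<in> vecs d \<Longrightarrow> simple_tensor s w \<in> tvecs m n d"
  by (auto simp: simple_tensor_def tvecs_def vecs_def)

lemma V0_base: "w0 \<in> V0 m n d rho w0"
  unfolding V0_def by blast

lemma simple_tensor_in_V0: "w \<in> V0 m n d rho w0 \<Longrightarrow> simple_tensor s w s' \<in> V0 m n d rho w0"
  unfolding simple_tensor_apply V0_def using lin_sub_zero by auto

lemma tform_simple_tensor:
  assumes "s \<in> idx m n"
  shows "tform m n d G x (simple_tensor s w) = wform d G (x s) w"
proof -
  have "tform m n d G x (simple_tensor s w) = (\<Sum>s'\<in>idx m n. if s' = s then wform d G (x s) w else 0)"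
    unfolding tform_def by (rule sum.cong) (auto simp: simple_tensor_def)
  also have "\<dots> = wform d G (x s) w"
    using assms by (simp add: idx_def)
  finally show ?thesis .
qed

lemma tform_lin_right:
  "tform m n d G x (\<lambda>s j. a * y s j + b * z s j) = cnj a * tform m n d G x y + cnj b * tform m n d G x z"
  unfolding tform_def wform_add_right wform_scale_right by (simp add: sum.distrib sum_distrib_left)

lemma tact_component:
  assumes "s \<in> idx m n" "y \<in> tvecs m n d"
  shows "tact m n d rho p q y s = (\<lambda>j. (if s = p then 1 else 0) * y q j
      + (-1) ^ ((par m p + par m q) * par m s) * mv d (rho p q) (y s) j)"
  using assms by (auto simp: tact_def mv_def tvecs_def fun_eq_iff)

lemma tact_simple_tensor:
  assumes "s \<in> idx m n" "w \<in> vecs d" "p \<in> idx m n"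
  shows "tact m n d rho p q (simple_tensor s w) = (\<lambda>s' j. (if q = s then 1 else 0) * simple_tensor p w s' j
     + (-1) ^ ((par m p + par m q) * par m s) * simple_tensor s (mv d (rho p q) w) s' j)"
  using assms by (auto simp: tact_def simple_tensor_def mv_def vecs_def fun_eq_iff)

text \<open>Both sides expand to <x_p, y_q> plus the same sum, as the sign in tact is symmetric
  in p and q.\<close>

lemma tform_tact_adjoint:
  assumes inv: "invariant_nondeg_form m n d rho G"
    and x: "x \<in> tvecs m n d" and y: "y \<in> tvecs m n d" and pq: "p \<in> idx m n" "q \<in> idx m n"
  shows "tform m n d G x (tact m n d rho p q y) = tform m n d G (tact m n d rho q p x) y"
proof -
  have xv: "\<And>s. x s \<in> vecs d" and yv: "\<And>s. y s \<in> vecs d"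
    using x y by (auto simp: tvecs_def vecs_def)
  define sg where "sg s = ((-1::complex) ^ ((par m p + par m q) * par m s))" for s
  define rest where "rest s = sg s * wform d G (mv d (rho q p) (x s)) (y s)" for s
  have left: "wform d G (x s) (tact m n d rho p q y s)
      = (if s = p then wform d G (x p) (y q) else 0) + rest s" if s: "s \<in> idx m n" for s
  proof -
    have "wform d G (x s) (tact m n d rho p q y s) = cnj (if s = p then 1 else 0) * wform d G (x s) (y q)
        + cnj (sg s) * wform d G (x s) (mv d (rho p q) (y s))"
      unfolding tact_component[OF s y] sg_def[symmetric] by (simp only: wform_add_right wform_scale_right)
    then show ?thesis
      using invariant_nondeg_form_adjoint[OF inv pq(2,1) xv yv] by (simp add: sg_def rest_def)
  qed
  have right: "wform d G (tact m n d rho q p x s) (y s)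
      = (if s = q then wform d G (x p) (y q) else 0) + rest s" if s: "s \<in> idx m n" for s
  proof -
    have "wform d G (tact m n d rho q p x s) (y s) = (if s = q then 1 else 0) * wform d G (x p) (y s)
        + sg s * wform d G (mv d (rho q p) (x s)) (y s)"
      unfolding tact_component[OF s x] by (simp only: wform_add_left wform_scale_left sg_def add.commute)
    then show ?thesis
      by (simp add: rest_def)
  qed
  have "tform m n d G x (tact m n d rho p q y) = wform d G (x p) (y q) + (\<Sum>s\<in>idx m n. rest s)"
    unfolding tform_def using pq by (simp add: left sum.distrib idx_def)
  also have "\<dots> = tform m n d G (tact m n d rho q p x) y"
    unfolding tform_def using pq by (simp add: right sum.distrib idx_def)
  finally show ?thesis .
qed

text \<open><v, E_pq (|s> \<otimes> w)> = <E_qp v, |s> \<otimes> w> = 0, and E_pq (|s> \<otimes> w) is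
  \<plusminus>|s> \<otimes> E_pq w plus a multiple of |p> \<otimes> w, which is orthogonal to v.\<close>

lemma maximal_weight_vector_orthogonal_lowering_closed:
  assumes inv: "invariant_nondeg_form m n d rho G"
    and v: "maximal_weight_vector m n d rho v"
  shows "lowering_closed m n d rho {w \<in> vecs d. \<forall>s\<in>idx m n. wform d G (v s) w = 0}"
  unfolding lowering_closed_def
proof (intro ballI impI CollectI conjI)
  fix p q w s
  assume pq: "p \<in> idx m n" "q \<in> idx m n" "q < p"
    and w: "w \<in> {w \<in> vecs d. \<forall>s\<in>idx m n. wform d G (v s) w = 0}" and s: "s \<in> idx m n"
  have wv: "w \<in> vecs d" and vw: "\<And>s. s \<in> idx m n \<Longrightarrow> wform d G (v s) w = 0"
    using w by auto
  have vt: "v \<in> tvecs m n d" and raise: "tact m n d rho q p v = (\<lambda>_ _. 0)"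
    using v pq unfolding maximal_weight_vector_def by auto
  have "0 = tform m n d G (tact m n d rho q p v) (simple_tensor s w)"
    unfolding raise tform_def by simp
  also have "\<dots> = tform m n d G v (tact m n d rho p q (simple_tensor s w))"
    using tform_tact_adjoint[OF inv vt simple_tensor_in_tvecs[OF s wv] pq(1,2)] by simp
  also have "\<dots> = cnj (if q = s then 1 else 0) * tform m n d G v (simple_tensor p w)
      + cnj ((-1) ^ ((par m p + par m q) * par m s)) * tform m n d G v (simple_tensor s (mv d (rho p q) w))"
    unfolding tact_simple_tensor[OF s wv pq(1)] by (rule tform_lin_right)
  also have "\<dots> = (-1) ^ ((par m p + par m q) * par m s) * wform d G (v s) (mv d (rho p q) w)"
    using vw[OF pq(1)] by (simp add: tform_simple_tensor pq(1) s)
  finally show "wform d G (v s) (mv d (rho p q) w) = 0"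
    by simp
next
  fix p q w
  show "mv d (rho p q) w \<in> vecs d" by (rule mv_in_vecs)
qed

lemma tvecs_orthogonal_eq_zero:
  assumes inv: "invariant_nondeg_form m n d rho G" and x: "x \<in> tvecs m n d"
    and orth: "\<forall>s\<in>idx m n. \<forall>w\<in>vecs d. wform d G (x s) w = 0"
  shows "x = (\<lambda>_ _. 0)"
proof
  fix s
  show "x s = (\<lambda>_. 0)"
  proof (cases "s \<in> idx m n")
    case True
    moreover have "x s \<in> vecs d"
      using x unfolding tvecs_def vecs_def by blast
    ultimately show ?thesis
      using orth by (intro invariant_nondeg_form_nondeg[OF inv]) auto
  next
    case False
    then show ?thesis
      using x unfolding tvecs_def by auto
  qed
qed

theorem lemma8:
  fixes m n d :: nat
    and wpar :: "nat \<Rightarrow> bool"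
    and rho :: "nat \<Rightarrow> nat \<Rightarrow> nat \<Rightarrow> nat \<Rightarrow> complex"
    and G :: "nat \<Rightarrow> nat \<Rightarrow> complex"
    and w0 :: "nat \<Rightarrow> complex"
    and v :: "nat \<Rightarrow> nat \<Rightarrow> complex"
  assumes "irreducible_module m n d wpar rho"
    and "hw_vector m n d rho w0"
    and "invariant_nondeg_form m n d rho G"
    and "maximal_weight_vector m n d rho v"
    and "v \<noteq> (\<lambda>_ _. 0)"
  shows "\<exists>y\<in>tvecs m n d. (\<forall>s. y s \<in> V0 m n d rho w0) \<and> tform m n d G v y \<noteq> 0"
proof (rule ccontr)
  assume "\<not> ?thesis"
  then have orth: "tform m n d G v y = 0"
    if "y \<in> tvecs m n d" "\<forall>s. y s \<in> V0 m n d rho w0" for y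
    using that by blast
  define D where "D = {w \<in> vecs d. \<forall>s\<in>idx m n. wform d G (v s) w = 0}"
  have w0: "w0 \<in> vecs d"
    using assms(2) unfolding hw_vector_def by blast
  have "wform d G (v s) w0 = 0" if "s \<in> idx m n" for s
    using orth[OF simple_tensor_in_tvecs[OF that w0]] tform_simple_tensor[OF that]
      simple_tensor_in_V0[OF V0_base] by simp
  then have "w0 \<in> D"
    unfolding D_def using w0 by blast
  moreover have "lin_sub d D"
    unfolding D_def by (rule lin_sub_orthogonal)
  moreover have "lowering_closed m n d rho D"
    unfolding D_def by (rule maximal_weight_vector_orthogonal_lowering_closed[OF assms(3,4)])
  ultimately have "lowering_closure m n d rho w0 \<subseteq> D"
    by (intro lowering_closure_least)
  then have "vecs d \<subseteq> D"
    unfolding lowering_closure_hw_vector[OF assms(1-3)] .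
  then have "\<forall>s\<in>idx m n. \<forall>w\<in>vecs d. wform d G (v s) w = 0"
    unfolding D_def by blast
  then have "v = (\<lambda>_ _. 0)"
    using assms(4) tvecs_orthogonal_eq_zero[OF assms(3)] unfolding maximal_weight_vector_def by blast
  then show False
    using assms(5) by blast
qed

end
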